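(* Consider the one-cell system. Assume that at time $0$ the disk rotates with angular velocity $\hat\omega$ and that none of the particles which are inside the cell will collide with the disk before time $\tau>0$. Then, given any $\omega\in\mathbb{R}$ and any $0<\delta<\tau$, there exists a way to inject one particle into the cell through the left opening $\partial\Gamma_{\rm L}$ at time $0$ (with a suitable injection point and inward-pointing velocity) such that at time $\delta$ the disk has angular velocity $\omega$ and the injected particle has left the cell through $\partial\Gamma_{\rm L}$. The same holds with $\partial\Gamma_{\rm R}$ in place of $\partial\Gamma_{\rm L}$.
   Context: Cell geometry. Let $\Gamma_{\rm box}\subset\mathbb{R}^2$ be a bounded connected closed domain such that $(x,y)\in\Gamma_{\rm box}$ implies $x\in[0,L]$. Its boundary is $\partial\Gamma_{\rm box}=\partial\Gamma_{\rm L}\cup\partial\Gamma_{\rm R}\cup\bigcup_{k=1}^b\partial\Gamma_k$, where $\partial\Gamma_{\rm L}=\{(0,y):y\in[-a,a]\}$ and $\partial\Gamma_{\rm R}=\{(L,y):y\in[-a,a]\}$ are the two "openings" ($a>0$), and each $\partial\Gamma_k$ is an arc of a circle $C_k$ with center $c_k$, the arcs being oriented so that $\partial\Gamma_{\rm box}$ is everywhere dispersing (the arcs bulge into the domain). In the interior of $\Gamma_{\rm box}$ lies a closed disk $D$ of center $c=(L/2,0)$ and radius $r$ with $\partial D\cap\partial\Gamma_{\rm box}=\emptyset$, and for every $z\in\partial\Gamma_{\rm box}$ the segment $[c,z]$ meets $\partial\Gamma_{\rm box}$ only at $z$. The cell is $\Gamma=\Gamma_{\rm box}\setminus D$ (with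 boundary $\partial\Gamma=\partial\Gamma_{\rm box}\cup\partial D$); its corners $\partial\Gamma^*$ are the points where two of the boundary pieces (arcs or openings) meet. Dynamics. Point particles move in straight lines with constant velocity inside $\Gamma$ and do not interact with each other. The disk has an angular position $\phi\in[0,2\pi)$ and angular velocity $\omega\in\mathbb{R}$ with $\dot\phi=\omega$ between collisions. At a point $q$ of $\partial\Gamma$ write the particle velocity as $v=v^{\rm n}e_{\rm n}+v^{\rm t}e_{\rm t}$ with $e_{\rm n}$ the outward unit normal and $e_{\rm t}$ the unit tangent. Collision rules (primes denote values after collision; positions and $\phi$ are unchanged): (1) if $q\in\partial\Gamma_{\rm L}\cup\partial\Gamma_{\rm R}$, the particle continues straight and leaves the cell; (2) if $q\in\partial\Gamma_{\rm box}\setminus(\partial\Gamma_{\rm L}\cup\partial\Gamma_{\rm R})$, then $(v^{\rm n})'=-v^{\rm n}$, $(v^{\rm t})'=v^{\rm t}$ (specular reflection); (3) if $q\in\partial D$, then $(v^{\rm n})'=-v^{\rm n}$, $(v^{\rm t})'=\omega$, $\omega'=v^{\rm t}$. Heat baths. Particles may be injected into the cell at any time through $\partial\Gamma_{\rm L}$ or $\partial\Gamma_{\rm R}$, at any point of the opening and with any velocity pointing into the cell; a realization of the injection process on a time interval is the finite collection of such injection times, points and velocities. Every open set of realizations is assumed to have positive probability. *)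

theory Defs
  imports "HOL-Analysis.Analysis"
begin

type_synonym pt = "real \<times> real"

text \<open>Geometry of one cell: length L, half-width a of the openings, radius r of the
  rotating disk, number b of circular arcs, their circle centers and radii, the arcs
  themselves, and the region Gamma_box.\<close>
record cell =
  Lc   :: real
  ac   :: real
  rc   :: real
  nb   :: nat
  cen  :: "nat \<Rightarrow> pt"
  rad  :: "nat \<Rightarrow> real"
  arcs :: "nat \<Rightarrow> pt set"
  box  :: "pt set"

definition openL :: "cell \<Rightarrow> pt set" where
  "openL C = {(0, y) | y. - ac C \<le> y \<and> y \<le> ac C}"

definition openR :: "cell \<Rightarrow> pt set" where
  "openR C = {(Lc C, y) | y. - ac C \<le> y \<and> y \<le> ac C}"

definition diskc :: "cell \<Rightarrow> pt" where
  "diskc C = (Lc C / 2, 0)"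

definition Gamma :: "cell \<Rightarrow> pt set" where
  "Gamma C = box C - ball (diskc C) (rc C)"

definition bdry :: "cell \<Rightarrow> pt set" where
  "bdry C = frontier (box C) \<union> sphere (diskc C) (rc C)"

definition is_arc :: "pt \<Rightarrow> real \<Rightarrow> pt set \<Rightarrow> bool" where
  "is_arc c \<rho> A \<longleftrightarrow> (\<exists>\<theta>0 \<theta>1. \<theta>0 < \<theta>1 \<and> \<theta>1 - \<theta>0 < 2 * pi \<and>
      A = (\<lambda>\<theta>. c + \<rho> *\<^sub>R (cos \<theta>, sin \<theta>)) ` {\<theta>0..\<theta>1})"

definition cell_ok :: "cell \<Rightarrow> bool" where
  "cell_ok C \<longleftrightarrow>
     Lc C > 0 \<and> ac C > 0 \<and> rc C > 0 \<and>
     closed (box C) \<and> bounded (box C) \<and> connected (box C) \<and>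
     box C = closure (interior (box C)) \<and>
     (\<forall>x y. (x, y) \<in> box C \<longrightarrow> 0 \<le> x \<and> x \<le> Lc C) \<and>
     frontier (box C) = openL C \<union> openR C \<union> (\<Union>k<nb C. arcs C k) \<and>
     (\<forall>k<nb C. rad C k > 0 \<and> is_arc (cen C k) (rad C k) (arcs C k) \<and>
        \<comment> \<open>dispersing: near each point of the arc the domain lies outside the circle C_k\<close>
        (\<forall>z\<in>arcs C k. \<exists>e>0. box C \<inter> ball z e \<inter> ball (cen C k) (rad C k) = {})) \<and>
     cball (diskc C) (rc C) \<subseteq> interior (box C) \<and>
     (\<forall>z\<in>frontier (box C). closed_segment (diskc C) z \<inter> frontier (box C) = {z})"

definition next_hit :: "cell \<Rightarrow> pt \<Rightarrow> pt \<Rightarrow> real \<Rightarrow> bool" where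
  "next_hit C q v s \<longleftrightarrow> s > 0 \<and> q + s *\<^sub>R v \<in> bdry C \<and>
     (\<forall>u. 0 < u \<and> u < s \<longrightarrow> q + u *\<^sub>R v \<in> Gamma C - bdry C)"

datatype side = Lft | Rgt

text \<open>Result: the particle leaves through an opening (Inl side), or new velocity and new
  angular velocity (Inr (v', w')); None at corners where the rules are undefined.
  At the disk, e_n = (c - x)/r is the outward normal of the cell and e_t is e_n rotated
  by +90 degrees.\<close>
definition collide :: "cell \<Rightarrow> pt \<Rightarrow> pt \<Rightarrow> real \<Rightarrow> (side + pt \<times> real) option" where
  "collide C x v w =
    (if x \<in> openL C then Some (Inl Lft)
     else if x \<in> openR C then Some (Inl Rgt)
     else if x \<in> sphere (diskc C) (rc C) then
       (let en = (1 / rc C) *\<^sub>R (diskc C - x); et = (- snd en, fst en) in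
          Some (Inr ((- (v \<bullet> en)) *\<^sub>R en + w *\<^sub>R et, v \<bullet> et)))
     else if (\<exists>!k. k < nb C \<and> x \<in> arcs C k) then
       (let k = (THE k. k < nb C \<and> x \<in> arcs C k);
            n = (1 / rad C k) *\<^sub>R (x - cen C k) in
          Some (Inr (v - (2 * (v \<bullet> n)) *\<^sub>R n, w)))
     else None)"

text \<open>State of a particle: In q v t0 (at time t0, just after its last collision or
  injection, it was at q with velocity v), or Out s t (it left through opening s at time t).\<close>
datatype pstate = In pt pt real | Out side real

text \<open>System state: (time of last event, angular velocity of the disk, particles).\<close>
type_synonym sys = "real \<times> real \<times> pstate list"

inductive step :: "cell \<Rightarrow> sys \<Rightarrow> sys \<Rightarrow> bool" for C where
  exit: "\<lbrakk> i < length ps; ps ! i = In q v t0; next_hit C q v s; t' = t0 + s;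
          \<forall>j<length ps. \<forall>q' v' t0' s'. ps ! j = In q' v' t0' \<longrightarrow> next_hit C q' v' s' \<longrightarrow> t' \<le> t0' + s';
          collide C (q + s *\<^sub>R v) v w = Some (Inl sd) \<rbrakk>
        \<Longrightarrow> step C (t, w, ps) (t', w, ps[i := Out sd t'])"
| bounce: "\<lbrakk> i < length ps; ps ! i = In q v t0; next_hit C q v s; t' = t0 + s;
          \<forall>j<length ps. \<forall>q' v' t0' s'. ps ! j = In q' v' t0' \<longrightarrow> next_hit C q' v' s' \<longrightarrow> t' \<le> t0' + s';
          collide C (q + s *\<^sub>R v) v w = Some (Inr (vn, wn)) \<rbrakk>
        \<Longrightarrow> step C (t, w, ps) (t', wn, ps[i := In (q + s *\<^sub>R v) vn t'])"

definition at_time :: "cell \<Rightarrow> real \<Rightarrow> sys \<Rightarrow> bool" where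
  "at_time C T S \<longleftrightarrow> fst S \<le> T \<and>
     (\<forall>p\<in>set (snd (snd S)). \<forall>q v t0 s. p = In q v t0 \<longrightarrow> next_hit C q v s \<longrightarrow> T < t0 + s)"

definition init_sys :: "real \<Rightarrow> (pt \<times> pt) list \<Rightarrow> sys" where
  "init_sys w P = (0, w, map (\<lambda>(q, v). In q v 0) P)"

definition no_disk_hit_before :: "cell \<Rightarrow> real \<Rightarrow> sys \<Rightarrow> bool" where
  "no_disk_hit_before C \<tau> S0 \<longleftrightarrow>
     (\<forall>S. (step C)\<^sup>*\<^sup>* S0 S \<longrightarrow>
        (\<forall>p\<in>set (snd (snd S)). \<forall>q v t0. p = In q v t0 \<longrightarrow> q \<in> sphere (diskc C) (rc C) \<longrightarrow> \<tau> \<le> t0))"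

definition injection_works ::
  "cell \<Rightarrow> real \<Rightarrow> (pt \<times> pt) list \<Rightarrow> pt \<Rightarrow> pt \<Rightarrow> real \<Rightarrow> real \<Rightarrow> side \<Rightarrow> bool" where
  "injection_works C w P q0 v0 T w1 sd \<longleftrightarrow>
     (let S0 = init_sys w ((q0, v0) # P) in
       (\<exists>S. (step C)\<^sup>*\<^sup>* S0 S \<and> at_time C T S) \<and>
       (\<forall>S. (step C)\<^sup>*\<^sup>* S0 S \<longrightarrow> at_time C T S \<longrightarrow>
            fst (snd S) = w1 \<and> (\<exists>t'. hd (snd (snd S)) = Out sd t')))"

end

theory Submission
  imports Defs
begin

(* The injected particle flies straight, in time s, from the opening to the point x of the disk
   facing it, arriving there with tangential velocity \<omega>. The collision rule exchanges
   the tangential velocity of the particle with the angular velocity of the disk, so afterwards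
   the disk turns with \<omega> while the particle flies straight back to the opening with tangential
   velocity w_hat and leaves at time 2s < \<delta>. For small s the entry and the exit point both lie in the
   opening, and every segment from x to a point of the opening lies in the cone spanned by the disk
   center and the opening, hence in the cell, because segments from the center to the boundary
   of Gamma_box meet that boundary only at their end point.

   The other particles do not reach the disk before \<tau> > \<delta>, so up to time \<delta> their evolution
   never reads the angular velocity of the disk. Hence, up to time \<delta>, the reachable states of
   the combined system are exactly the interleavings, ordered by event times, of an evolution of
   the other particles with the three stages of the round trip. *)

section \<open>Event-driven dynamics\<close>

definition no_hit_before :: "cell \<Rightarrow> real \<Rightarrow> pstate \<Rightarrow> bool" where
  "no_hit_before C t p \<longleftrightarrow> (\<forall>q v t0 s. p = In q v t0 \<longrightarrow> next_hit C q v s \<longrightarrow> t \<le> t0 + s)"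

lemma no_hit_before_Out [simp]: "no_hit_before C t (Out sd t')"
  by (simp add: no_hit_before_def)

lemma no_hit_before_mono: "no_hit_before C t p \<Longrightarrow> t' \<le> t \<Longrightarrow> no_hit_before C t' p"
  unfolding no_hit_before_def using order_trans by blast

lemma next_hit_unique:
  assumes "next_hit C q v s" "next_hit C q v s'"
  shows "s = s'"
proof (rule ccontr)
  assume "s \<noteq> s'"
  then consider "s < s'" | "s' < s" by linarith
  then show False
    by cases (use assms in \<open>auto simp: next_hit_def\<close>)
qed

lemma no_hit_before_In: "next_hit C q v s \<Longrightarrow> no_hit_before C t (In q v t0) \<longleftrightarrow> t \<le> t0 + s"
  unfolding no_hit_before_def by (metis next_hit_unique pstate.inject(1))

lemma all_nth_no_hit_before_iff:
  "(\<forall>j<length ps. \<forall>q v t0 s. ps ! j = In q v t0 \<longrightarrow> next_hit C q v s \<longrightarrow> t \<le> t0 + s) \<longleftrightarrow>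
   (\<forall>p\<in>set ps. no_hit_before C t p)"
  by (auto simp: no_hit_before_def all_set_conv_all_nth)

lemma step_exitI:
  assumes "i < length ps" "ps ! i = In q v t0" "next_hit C q v s"
    and "\<forall>p\<in>set ps. no_hit_before C (t0 + s) p"
    and "collide C (q + s *\<^sub>R v) v w = Some (Inl sd)"
  shows "step C (t, w, ps) (t0 + s, w, ps[i := Out sd (t0 + s)])"
  by (rule step.exit[OF assms(1-3) refl _ assms(5)]) (use assms(4) all_nth_no_hit_before_iff in blast)

lemma step_bounceI:
  assumes "i < length ps" "ps ! i = In q v t0" "next_hit C q v s"
    and "\<forall>p\<in>set ps. no_hit_before C (t0 + s) p"
    and "collide C (q + s *\<^sub>R v) v w = Some (Inr (vn, wn))"
  shows "step C (t, w, ps) (t0 + s, wn, ps[i := In (q + s *\<^sub>R v) vn (t0 + s)])"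
  by (rule step.bounce[OF assms(1-3) refl _ assms(5)]) (use assms(4) all_nth_no_hit_before_iff in blast)

lemma step_cases [consumes 1, case_names exit bounce]:
  assumes "step C (t, w, ps) (t', w', ps')"
  obtains (exit) i q v t0 s sd where "i < length ps" "ps ! i = In q v t0" "next_hit C q v s"
      "t' = t0 + s" "\<forall>p\<in>set ps. no_hit_before C t' p"
      "collide C (q + s *\<^sub>R v) v w = Some (Inl sd)" "w' = w" "ps' = ps[i := Out sd t']"
  | (bounce) i q v t0 s vn where "i < length ps" "ps ! i = In q v t0" "next_hit C q v s"
      "t' = t0 + s" "\<forall>p\<in>set ps. no_hit_before C t' p"
      "collide C (q + s *\<^sub>R v) v w = Some (Inr (vn, w'))" "ps' = ps[i := In (q + s *\<^sub>R v) vn t']"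
  using assms unfolding all_nth_no_hit_before_iff[symmetric] by cases blast+

lemma step_target_no_hit_before:
  assumes "step C (t, w, ps) (t', w', ps')"
  shows "\<forall>p\<in>set ps'. no_hit_before C t' p"
  using assms
proof (cases rule: step_cases)
  case (exit i q v t0 s sd)
  then show ?thesis using set_update_subset_insert by fastforce
next
  case (bounce i q v t0 s vn)
  have "no_hit_before C t' (In (q + s *\<^sub>R v) vn t')"
    by (auto simp: no_hit_before_def next_hit_def)
  then show ?thesis using bounce set_update_subset_insert by fastforce
qed

lemma step_source_no_hit_before:
  "step C (t, w, ps) (t', w', ps') \<Longrightarrow> \<forall>p\<in>set ps. no_hit_before C t' p"
  by (cases rule: step_cases) auto

lemma at_time_no_hit_before: "at_time C T (t, w, ps) \<Longrightarrow> \<forall>p\<in>set ps. no_hit_before C T p"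
  unfolding at_time_def no_hit_before_def by fastforce

lemma reachable_step_time_mono:
  assumes "(step C)\<^sup>*\<^sup>* (init_sys w0 P) (t, w, ps)" and "step C (t, w, ps) (t', w', ps')"
  shows "t \<le> t'"
proof -
  have pending: "\<forall>p\<in>set ps. no_hit_before C t p"
    using assms(1)
  proof (cases rule: rtranclp.cases)
    case rtrancl_refl
    then show ?thesis by (auto simp: init_sys_def no_hit_before_def next_hit_def)
  next
    case (rtrancl_into_rtrancl S)
    then show ?thesis by (cases S) (blast dest: step_target_no_hit_before)
  qed
  from assms(2) show ?thesis
    by (cases rule: step_cases) (use pending nth_mem no_hit_before_def in metis)+
qed

lemma step_Cons_head:
  assumes "step C (t, w, [p]) (t', w', [p'])" and "\<forall>y\<in>set ps. no_hit_before C t' y"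
  shows "step C (t, w, p # ps) (t', w', p' # ps)"
  using assms(1)
proof (cases rule: step_cases)
  case (exit i q v t0 s sd)
  have "step C (t, w, p # ps) (t0 + s, w, (p # ps)[0 := Out sd (t0 + s)])"
    by (rule step_exitI) (use exit assms(2) in auto)
  then show ?thesis using exit by simp
next
  case (bounce i q v t0 s vn)
  have "step C (t, w, p # ps) (t0 + s, w', (p # ps)[0 := In (q + s *\<^sub>R v) vn (t0 + s)])"
    by (rule step_bounceI) (use bounce assms(2) in auto)
  then show ?thesis using bounce by simp
qed

lemma step_Cons_tail:
  assumes "step C (t, w, ps) (t', w', ps')" and "no_hit_before C t' p"
  shows "step C (t, w, p # ps) (t', w', p # ps')"
  using assms(1)
proof (cases rule: step_cases)
  case (exit i q v t0 s sd)
  have "step C (t, w, p # ps) (t0 + s, w, (p # ps)[Suc i := Out sd (t0 + s)])"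
    by (rule step_exitI) (use exit assms(2) in auto)
  then show ?thesis using exit by simp
next
  case (bounce i q v t0 s vn)
  have "step C (t, w, p # ps) (t0 + s, w', (p # ps)[Suc i := In (q + s *\<^sub>R v) vn (t0 + s)])"
    by (rule step_bounceI) (use bounce assms(2) in auto)
  then show ?thesis using bounce by simp
qed

lemma step_Cons_cases [consumes 1, case_names head tail]:
  assumes "step C (t, w, p # ps) (t', w', qs)"
  obtains (head) p' where "qs = p' # ps" "step C (t, w, [p]) (t', w', [p'])"
      "\<forall>y\<in>set ps. no_hit_before C t' y"
  | (tail) ps' where "qs = p # ps'" "step C (t, w, ps) (t', w', ps')" "no_hit_before C t' p"
  using assms
proof (cases rule: step_cases)
  case (exit i q v t0 s sd)
  show ?thesis
  proof (cases i)
    case 0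
    have "step C (t, w, [p]) (t0 + s, w, [p][0 := Out sd (t0 + s)])"
      by (rule step_exitI) (use exit 0 in auto)
    then show ?thesis using exit 0 that(1) by simp
  next
    case (Suc j)
    have "step C (t, w, ps) (t0 + s, w, ps[j := Out sd (t0 + s)])"
      by (rule step_exitI) (use exit Suc in auto)
    then show ?thesis using exit Suc that(2) by simp
  qed
next
  case (bounce i q v t0 s vn)
  show ?thesis
  proof (cases i)
    case 0
    have "step C (t, w, [p]) (t0 + s, w', [p][0 := In (q + s *\<^sub>R v) vn (t0 + s)])"
      by (rule step_bounceI) (use bounce 0 in auto)
    then show ?thesis using bounce 0 that(1) by simp
  next
    case (Suc j)
    have "step C (t, w, ps) (t0 + s, w', ps[j := In (q + s *\<^sub>R v) vn (t0 + s)])"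
      by (rule step_bounceI) (use bounce Suc in auto)
    then show ?thesis using bounce Suc that(2) by simp
  qed
qed

lemma collide_Inl_any_omega: "collide C x v w = Some (Inl sd) \<Longrightarrow> collide C x v w' = Some (Inl sd)"
  by (auto simp: collide_def Let_def split: if_splits)

lemma collide_Inr_any_omega:
  "collide C x v w = Some (Inr r) \<Longrightarrow> \<exists>vn wn. collide C x v w' = Some (Inr (vn, wn))"
  by (auto simp: collide_def Let_def split: if_splits)

lemma collide_Inr_off_disk:
  assumes "collide C x v w = Some (Inr (vn, wn))" and "x \<notin> sphere (diskc C) (rc C)"
  shows "wn = w \<and> collide C x v w' = Some (Inr (vn, w'))"
  using assms by (auto simp: collide_def Let_def split: if_splits)

lemma early_step_ignores_disk:
  assumes nohit: "no_disk_hit_before C \<tau> S0" and reach: "(step C)\<^sup>*\<^sup>* S0 (tr, wr, ps)"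
    and st: "step C (t, w, ps) (t', w', ps')" and early: "t' < \<tau>"
  shows "w' = w \<and> step C (tx, wx, ps) (t', wx, ps')"
  using st
proof (cases rule: step_cases)
  case (exit i q v t0 s sd)
  have "step C (tx, wx, ps) (t0 + s, wx, ps[i := Out sd (t0 + s)])"
    by (rule step_exitI[OF exit(1-3)]) (use exit collide_Inl_any_omega in blast)+
  then show ?thesis using exit by simp
next
  case (bounce i q v t0 s vn)
  have off_disk: "q + s *\<^sub>R v \<notin> sphere (diskc C) (rc C)"
  proof
    assume on_disk: "q + s *\<^sub>R v \<in> sphere (diskc C) (rc C)"
    obtain vn' wn' where "collide C (q + s *\<^sub>R v) v wr = Some (Inr (vn', wn'))"
      using collide_Inr_any_omega[OF bounce(6)] by blast
    then have "step C (tr, wr, ps) (t', wn', ps[i := In (q + s *\<^sub>R v) vn' t'])"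
      using step_bounceI[OF bounce(1-3)] bounce(4,5) by simp
    then have reach': "(step C)\<^sup>*\<^sup>* S0 (t', wn', ps[i := In (q + s *\<^sub>R v) vn' t'])"
      using reach by simp
    have "In (q + s *\<^sub>R v) vn' t' \<in> set (snd (snd (t', wn', ps[i := In (q + s *\<^sub>R v) vn' t'])))"
      using bounce(1) by (simp add: set_update_memI)
    then have "\<tau> \<le> t'"
      by (rule nohit[unfolded no_disk_hit_before_def, rule_format, OF reach' _ refl on_disk])
    then show False using early by simp
  qed
  have "w' = w" "collide C (q + s *\<^sub>R v) v wx = Some (Inr (vn, wx))"
    using collide_Inr_off_disk[OF bounce(6) off_disk] by auto
  moreover have "step C (tx, wx, ps) (t0 + s, wx, ps[i := In (q + s *\<^sub>R v) vn (t0 + s)])"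
    by (rule step_bounceI[OF bounce(1-3)]) (use bounce calculation in auto)
  ultimately show ?thesis using bounce by simp
qed

section \<open>A round trip to the disk\<close>

locale round_trip =
  fixes C :: cell and q0 v0 x v1 :: pt and w0 w1 s1 s2 :: real and sd :: side
  assumes first_hit: "next_hit C q0 v0 s1" and hit_point: "q0 + s1 *\<^sub>R v0 = x"
    and disk_collision: "collide C x v0 w0 = Some (Inr (v1, w1))"
    and second_hit: "next_hit C x v1 s2"
    and exit_collision: "collide C (x + s2 *\<^sub>R v1) v1 w1 = Some (Inl sd)"
begin

definition trip_state :: "pstate \<Rightarrow> real \<Rightarrow> bool" where
  "trip_state p w \<longleftrightarrow>
     (p = In q0 v0 0 \<and> w = w0) \<or> (p = In x v1 s1 \<and> w = w1) \<or> (p = Out sd (s1 + s2) \<and> w = w1)"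

lemma trip_first_step: "step C (t, w0, [In q0 v0 0]) (s1, w1, [In x v1 s1])"
  using step_bounceI[of 0 "[In q0 v0 0]" q0 v0 0 C s1 w0 v1 w1 t] first_hit disk_collision hit_point
  by (simp add: no_hit_before_In)

lemma trip_second_step: "step C (t, w1, [In x v1 s1]) (s1 + s2, w1, [Out sd (s1 + s2)])"
  using step_exitI[of 0 "[In x v1 s1]" x v1 s1 C s2 w1 sd t] second_hit exit_collision
  by (simp add: no_hit_before_In)

lemma trip_step:
  assumes "step C (t, w, [p]) (t', w', [p'])" and "trip_state p w"
  shows "trip_state p' w'"
  using assms(1)
proof (cases rule: step_cases)
  case (exit i q v t0 s sd')
  then show ?thesis
    using assms(2) next_hit_unique[OF first_hit] next_hit_unique[OF second_hit]
      disk_collision hit_point exit_collision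
    by (auto simp: trip_state_def)
next
  case (bounce i q v t0 s vn)
  then show ?thesis
    using assms(2) next_hit_unique[OF first_hit] next_hit_unique[OF second_hit]
      disk_collision hit_point exit_collision
    by (auto simp: trip_state_def)
qed

lemma trip_advance:
  assumes reach: "(step C)\<^sup>*\<^sup>* N0 (t, w, p # ps)" and "trip_state p w" and "t \<le> T"
    and pending: "\<forall>y\<in>set ps. no_hit_before C T y"
  obtains t' w' p' where "(step C)\<^sup>*\<^sup>* N0 (t', w', p' # ps)" "trip_state p' w'" "t' \<le> T"
    "no_hit_before C T p'"
proof -
  note result = that
  have pending_before: "\<forall>y\<in>set ps. no_hit_before C T' y" if "T' \<le> T" for T'
    using pending that no_hit_before_mono by blast
  have from_second_leg: thesis
    if reach1: "(step C)\<^sup>*\<^sup>* N0 (t1, w1, In x v1 s1 # ps)" and "t1 \<le> T" for t1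
  proof (cases "T \<le> s1 + s2")
    case True
    then show thesis
      using result reach1 \<open>t1 \<le> T\<close> no_hit_before_In[OF second_hit] by (simp add: trip_state_def)
  next
    case False
    have "step C (t1, w1, In x v1 s1 # ps) (s1 + s2, w1, Out sd (s1 + s2) # ps)"
      by (rule step_Cons_head[OF trip_second_step pending_before]) (use False in simp)
    with reach1 have "(step C)\<^sup>*\<^sup>* N0 (s1 + s2, w1, Out sd (s1 + s2) # ps)"
      by (rule rtranclp.rtrancl_into_rtrancl)
    then show thesis
      using result False by (simp add: trip_state_def)
  qed
  consider "p = In q0 v0 0" "w = w0" | "p = In x v1 s1" "w = w1" | "p = Out sd (s1 + s2)" "w = w1"
    using \<open>trip_state p w\<close> trip_state_def by blast
  then show thesis
  proof cases
    case 1
    show thesis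
    proof (cases "T \<le> s1")
      case True
      then show thesis
        using result reach \<open>trip_state p w\<close> \<open>t \<le> T\<close> 1 no_hit_before_In[OF first_hit] by simp
    next
      case False
      have "step C (t, w0, In q0 v0 0 # ps) (s1, w1, In x v1 s1 # ps)"
        by (rule step_Cons_head[OF trip_first_step pending_before]) (use False in simp)
      with reach 1 have "(step C)\<^sup>*\<^sup>* N0 (s1, w1, In x v1 s1 # ps)"
        using rtranclp.rtrancl_into_rtrancl by fastforce
      then show thesis using from_second_leg False by simp
    qed
  next
    case 2
    then show thesis using from_second_leg reach \<open>t \<le> T\<close> by simp
  next
    case 3
    then show thesis using result reach \<open>trip_state p w\<close> \<open>t \<le> T\<close> by simp
  qed
qed

end

locale round_trip_injection = round_trip +
  fixes P :: "(pt \<times> pt) list" and \<tau> \<delta> :: real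
  assumes no_disk_hit: "no_disk_hit_before C \<tau> (init_sys w0 P)"
    and trip_in_time: "s1 + s2 < \<delta>" and before_tau: "\<delta> < \<tau>"
begin

lemma trip_finished:
  assumes "trip_state p w" and "no_hit_before C \<delta> p"
  shows "p = Out sd (s1 + s2) \<and> w = w1"
proof -
  have "s1 > 0" "s2 > 0" using first_hit second_hit by (simp_all add: next_hit_def)
  then show ?thesis
    using assms trip_in_time no_hit_before_In[OF first_hit] no_hit_before_In[OF second_hit]
    by (auto simp: trip_state_def)
qed

lemma reachable_split:
  assumes "(step C)\<^sup>*\<^sup>* (init_sys w0 ((q0, v0) # P)) N" and "fst N \<le> \<delta>"
  shows "\<exists>w p ps tr wr. N = (fst N, w, p # ps) \<and> trip_state p w \<and>
           (step C)\<^sup>*\<^sup>* (init_sys w0 P) (tr, wr, ps)"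
  using assms
proof (induction rule: rtranclp_induct)
  case base
  show ?case by (auto simp: trip_state_def init_sys_def)
next
  case (step N N')
  obtain t w qs t' w' qs' where N: "N = (t, w, qs)" and N': "N' = (t', w', qs')"
    by (metis prod_cases3)
  have "t \<le> t'" using reachable_step_time_mono step.hyps unfolding N N' by blast
  then obtain p ps tr wr where qs: "qs = p # ps" and trip: "trip_state p w"
    and old: "(step C)\<^sup>*\<^sup>* (init_sys w0 P) (tr, wr, ps)"
    using step.IH step.prems unfolding N N' by auto
  have early: "t' < \<tau>" using step.prems before_tau N' by simp
  from step.hyps(2)[unfolded N N' qs] show ?case
  proof (cases rule: step_Cons_cases)
    case (head p')
    then show ?thesis using trip_step[OF head(2) trip] old N' by auto
  next
    case (tail ps')
    have "w' = w" "step C (tr, wr, ps) (t', wr, ps')"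
      using early_step_ignores_disk[OF no_disk_hit old tail(2) early] by auto
    then show ?thesis using tail(1) trip old N' rtranclp.rtrancl_into_rtrancl by fastforce
  qed
qed

lemma reachable_lift:
  assumes "(step C)\<^sup>*\<^sup>* (init_sys w0 P) S" and "fst S \<le> \<delta>"
  shows "\<exists>w p. (step C)\<^sup>*\<^sup>* (init_sys w0 ((q0, v0) # P)) (fst S, w, p # snd (snd S)) \<and>
           trip_state p w"
  using assms
proof (induction rule: rtranclp_induct)
  case base
  show ?case by (auto simp: trip_state_def init_sys_def)
next
  case (step S S')
  obtain t wr ps t' wr' ps' where S: "S = (t, wr, ps)" and S': "S' = (t', wr', ps')"
    by (metis prod_cases3)
  have old_step: "step C (t, wr, ps) (t', wr', ps')" using step.hyps(2) S S' by simp
  have "t \<le> t'" using reachable_step_time_mono step.hyps(1) old_step S by blast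
  then obtain w p where "(step C)\<^sup>*\<^sup>* (init_sys w0 ((q0, v0) # P)) (t, w, p # ps)" "trip_state p w"
    using step.IH step.prems S S' by auto
  then obtain t'' w'' p'' where
    reach: "(step C)\<^sup>*\<^sup>* (init_sys w0 ((q0, v0) # P)) (t'', w'', p'' # ps)"
    and trip: "trip_state p'' w''" and "no_hit_before C t' p''"
    using trip_advance step_source_no_hit_before[OF old_step] \<open>t \<le> t'\<close> by metis
  have early: "t' < \<tau>" using step.prems before_tau S' by simp
  have "step C (t'', w'', ps) (t', w'', ps')"
    using early_step_ignores_disk[OF no_disk_hit step.hyps(1)[unfolded S] old_step early] by blast
  then have "step C (t'', w'', p'' # ps) (t', w'', p'' # ps')"
    using step_Cons_tail \<open>no_hit_before C t' p''\<close> by blast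
  then show ?case using reach trip S' rtranclp.rtrancl_into_rtrancl by fastforce
qed

lemma injection_works:
  assumes "\<exists>S. (step C)\<^sup>*\<^sup>* (init_sys w0 P) S \<and> at_time C \<delta> S"
  shows "injection_works C w0 P q0 v0 \<delta> w1 sd"
  unfolding injection_works_def Let_def
proof (intro conjI allI impI)
  obtain t wr ps where old: "(step C)\<^sup>*\<^sup>* (init_sys w0 P) (t, wr, ps)" "at_time C \<delta> (t, wr, ps)"
    using assms by (metis prod_cases3)
  have "t \<le> \<delta>" using old(2) by (simp add: at_time_def)
  then obtain w p where "(step C)\<^sup>*\<^sup>* (init_sys w0 ((q0, v0) # P)) (t, w, p # ps)" "trip_state p w"
    using reachable_lift[OF old(1)] by auto
  then obtain t' w' p' where reach: "(step C)\<^sup>*\<^sup>* (init_sys w0 ((q0, v0) # P)) (t', w', p' # ps)"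
    and "trip_state p' w'" "t' \<le> \<delta>" "no_hit_before C \<delta> p'"
    using trip_advance at_time_no_hit_before[OF old(2)] \<open>t \<le> \<delta>\<close> by metis
  then have "at_time C \<delta> (t', w', p' # ps)"
    using trip_finished old(2) by (auto simp: at_time_def)
  with reach show "\<exists>S. (step C)\<^sup>*\<^sup>* (init_sys w0 ((q0, v0) # P)) S \<and> at_time C \<delta> S" by blast
next
  fix S assume reach: "(step C)\<^sup>*\<^sup>* (init_sys w0 ((q0, v0) # P)) S" and at: "at_time C \<delta> S"
  then obtain w p ps where S: "S = (fst S, w, p # ps)" and "trip_state p w"
    using reachable_split[OF reach] by (auto simp: at_time_def)
  moreover have "no_hit_before C \<delta> p"
    using at_time_no_hit_before[of C \<delta> "fst S" w "p # ps"] at S by simp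
  ultimately have "p = Out sd (s1 + s2) \<and> w = w1" using trip_finished by blast
  then show "fst (snd S) = w1" "\<exists>t'. hd (snd (snd S)) = Out sd t'" by (subst S; simp)+
qed

end

section \<open>Geometry of the cell\<close>

lemma segment_to_frontier_in_interior:
  fixes c z :: "'a::real_normed_vector"
  assumes c: "c \<in> interior B" and seg: "closed_segment c z \<inter> frontier B \<subseteq> {z}"
    and u: "0 \<le> u" "u < 1"
  shows "c + u *\<^sub>R (z - c) \<in> interior B"
proof (cases "z = c")
  case True
  then show ?thesis using c by simp
next
  case False
  define p where "p = c + u *\<^sub>R (z - c)"
  have "p \<in> closed_segment c z"
    unfolding p_def in_segment using u by (auto simp: algebra_simps)
  then have sub: "closed_segment c p \<subseteq> closed_segment c z"
    by (simp add: subset_closed_segment)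
  have "norm (p - c) = u * norm (z - c)"
    unfolding p_def using u by simp
  also have "\<dots> < norm (z - c)" using u False by simp
  finally have "z \<notin> closed_segment c p"
    using segment_bound1 leD by blast
  then have no_frontier: "closed_segment c p \<inter> frontier B = {}"
    using sub seg by blast
  have "closed_segment c p \<subseteq> B"
  proof (rule ccontr)
    assume "\<not> closed_segment c p \<subseteq> B"
    moreover have "c \<in> closed_segment c p \<inter> B" using c interior_subset by auto
    ultimately have "closed_segment c p \<inter> frontier B \<noteq> {}"
      by (intro connected_Int_frontier connected_segment) blast+
    then show False using no_frontier by simp
  qed
  then have "p \<in> B" "p \<notin> frontier B" using no_frontier by auto
  then show ?thesis
    unfolding p_def[symmetric] frontier_def using closure_subset by auto
qed

lemma cell_ok_disk_center_interior: "cell_ok C \<Longrightarrow> diskc C \<in> interior (box C)"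
  unfolding cell_ok_def by (meson centre_in_cball less_imp_le subsetD)

lemma cell_ok_radial_interior:
  assumes "cell_ok C" "z \<in> frontier (box C)" "0 \<le> u" "u < 1"
  shows "diskc C + u *\<^sub>R (z - diskc C) \<in> interior (box C)"
proof (rule segment_to_frontier_in_interior[OF cell_ok_disk_center_interior[OF assms(1)]])
  show "closed_segment (diskc C) z \<inter> frontier (box C) \<subseteq> {z}"
  proof -
    have "\<forall>z\<in>frontier (box C). closed_segment (diskc C) z \<inter> frontier (box C) = {z}"
      using assms(1) unfolding cell_ok_def by (elim conjE)
    then show ?thesis using assms(2) by blast
  qed
qed (use assms in auto)

fun side_opening :: "cell \<Rightarrow> side \<Rightarrow> pt set" where
  "side_opening C Lft = openL C"
| "side_opening C Rgt = openR C"

fun inward :: "side \<Rightarrow> real" where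
  "inward Lft = 1"
| "inward Rgt = -1"

lemma inward_square [simp]: "inward sd * inward sd = 1"
  by (cases sd) simp_all

lemma abs_inward [simp]: "\<bar>inward sd\<bar> = 1"
  by (cases sd) simp_all

lemma side_opening_eq: "side_opening C sd = {(Lc C / 2 - inward sd * (Lc C / 2), y) | y. \<bar>y\<bar> \<le> ac C}"
  by (cases sd) (auto simp: openL_def openR_def abs_le_iff)

lemma side_opening_frontier: "cell_ok C \<Longrightarrow> side_opening C sd \<subseteq> frontier (box C)"
  by (cases sd) (auto simp: cell_ok_def)

lemma collide_side_opening: "Lc C > 0 \<Longrightarrow> z \<in> side_opening C sd \<Longrightarrow> collide C z v w = Some (Inl sd)"
  by (cases sd) (auto simp: collide_def openL_def openR_def)

lemma cell_ok_radius_lt: "cell_ok C \<Longrightarrow> rc C < Lc C / 2"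
proof (rule ccontr)
  assume ok: "cell_ok C" and "\<not> rc C < Lc C / 2"
  then have "(0, 0) \<in> cball (diskc C) (rc C)"
    by (auto simp: diskc_def dist_Pair_Pair cell_ok_def)
  then have "(0, 0) \<in> interior (box C)" using ok by (auto simp: cell_ok_def)
  moreover have "(0, 0) \<in> frontier (box C)"
    using ok side_opening_frontier[OF ok, of Lft] by (auto simp: cell_ok_def openL_def)
  ultimately show False by (simp add: frontier_def)
qed

definition disk_pole :: "cell \<Rightarrow> side \<Rightarrow> pt" where
  "disk_pole C sd = (Lc C / 2 - inward sd * rc C, 0)"

lemma disk_pole_sphere: "rc C > 0 \<Longrightarrow> disk_pole C sd \<in> sphere (diskc C) (rc C)"
  by (simp add: disk_pole_def diskc_def dist_Pair_Pair abs_mult)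

lemma collide_disk_pole:
  assumes "cell_ok C"
  shows "collide C (disk_pole C sd) v w = Some (Inr ((- fst v, inward sd * w), inward sd * snd v))"
proof -
  have r: "0 < rc C" "rc C < Lc C / 2" using assms cell_ok_radius_lt by (auto simp: cell_ok_def)
  then have "disk_pole C sd \<notin> openL C" "disk_pole C sd \<notin> openR C"
    by (cases sd; simp add: disk_pole_def openL_def openR_def)+
  moreover have "(1 / rc C) *\<^sub>R (diskc C - disk_pole C sd) = (inward sd, 0)"
    using r by (simp add: disk_pole_def diskc_def)
  ultimately show ?thesis
    using disk_pole_sphere[OF r(1)] by (simp add: collide_def Let_def inner_prod_def mult.assoc[symmetric])
qed

lemma segment_pole_opening_in_cell:
  assumes ok: "cell_ok C" and z: "z \<in> side_opening C sd" and u: "0 < u" "u < 1"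
  shows "disk_pole C sd + u *\<^sub>R (z - disk_pole C sd) \<in> Gamma C - bdry C"
proof -
  define h e r where "h = Lc C / 2" and "e = inward sd" and "r = rc C"
  have center: "diskc C = (h, 0)" by (simp add: diskc_def h_def)
  obtain y where z_eq: "z = (h - e * h, y)" and y: "\<bar>y\<bar> \<le> ac C"
    using z unfolding side_opening_eq h_def e_def by blast
  have r: "0 < r" "r < h" using ok cell_ok_radius_lt by (auto simp: cell_ok_def r_def h_def)
  define \<rho> where "\<rho> = r + u * (h - r)"
  have "\<rho> - r = u * (h - r)" "h - \<rho> = (1 - u) * (h - r)" "\<rho> - u * h = (1 - u) * r"
    by (simp_all add: \<rho>_def algebra_simps)
  then have \<rho>: "r < \<rho>" "\<rho> < h" "u * h \<le> \<rho>"
    using u r by (smt (verit) mult_pos_pos)+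
  text \<open>The point lies on the ray from the disk center through a point of the opening.\<close>
  define z' where "z' = (h - e * h, u * y * h / \<rho>)"
  have "\<bar>u * y * h / \<rho>\<bar> = (u * h / \<rho>) * \<bar>y\<bar>"
    using u r \<rho> by (simp add: abs_mult)
  also have "\<dots> \<le> \<bar>y\<bar>"
    using \<rho> r u by (intro mult_left_le_one_le) auto
  also have "\<dots> \<le> ac C" by (rule y)
  finally have "z' \<in> side_opening C sd"
    unfolding side_opening_eq z'_def h_def e_def by auto
  then have "diskc C + (\<rho> / h) *\<^sub>R (z' - diskc C) \<in> interior (box C)"
    using \<rho> r by (intro cell_ok_radial_interior[OF ok] subsetD[OF side_opening_frontier[OF ok]]) auto
  moreover have p: "disk_pole C sd + u *\<^sub>R (z - disk_pole C sd) = (h - e * \<rho>, u * y)"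
    unfolding disk_pole_def z_eq \<rho>_def h_def e_def r_def by (simp add: algebra_simps)
  moreover have "diskc C + (\<rho> / h) *\<^sub>R (z' - diskc C) = (h - e * \<rho>, u * y)"
    unfolding center z'_def using \<rho> r by (simp add: algebra_simps)
  ultimately have interior: "(h - e * \<rho>, u * y) \<in> interior (box C)" by simp
  have "r < dist (fst (diskc C)) (h - e * \<rho>)"
    using \<rho> r by (simp add: center e_def dist_real_def abs_mult)
  then have "r < dist (diskc C) (h - e * \<rho>, u * y)"
    using dist_fst_le[of "diskc C" "(h - e * \<rho>, u * y)"] by simp
  with interior show ?thesis
    unfolding p Gamma_def bdry_def frontier_def r_def using interior_subset by auto
qed

lemma next_hit_segment:
  assumes s: "0 < s" and z: "z \<in> bdry C"
    and inside: "\<And>u. 0 < u \<Longrightarrow> u < 1 \<Longrightarrow> q + u *\<^sub>R (z - q) \<in> Gamma C - bdry C"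
  shows "next_hit C q ((1 / s) *\<^sub>R (z - q)) s"
  unfolding next_hit_def
proof (intro conjI allI impI)
  show "q + s *\<^sub>R (1 / s) *\<^sub>R (z - q) \<in> bdry C" using s z by simp
next
  fix u assume "0 < u \<and> u < s"
  then show "q + u *\<^sub>R (1 / s) *\<^sub>R (z - q) \<in> Gamma C - bdry C"
    using inside[of "u / s"] s by simp
qed (rule s)

lemma injection_through_side:
  assumes ok: "cell_ok C" and nohit: "no_disk_hit_before C \<tau> (init_sys w P)"
    and \<delta>: "0 < \<delta>" "\<delta> < \<tau>"
    and defined: "\<exists>S. (step C)\<^sup>*\<^sup>* (init_sys w P) S \<and> at_time C \<delta> S"
  shows "\<exists>q0 v0. q0 \<in> side_opening C sd \<and> inward sd * fst v0 > 0 \<and>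
           injection_works C w P q0 v0 \<delta> \<omega> sd"
proof -
  define h e r a where "h = Lc C / 2" and "e = inward sd" and "r = rc C" and "a = ac C"
  have r: "0 < r" "r < h" using ok cell_ok_radius_lt by (auto simp: cell_ok_def r_def h_def)
  have "0 < a" using ok by (simp add: cell_ok_def a_def)
  define K where "K = \<bar>\<omega>\<bar> + \<bar>w\<bar> + 1"
  define s where "s = min (\<delta> / 4) (a / K)"
  have K: "0 < K" "\<bar>\<omega>\<bar> \<le> K" "\<bar>w\<bar> \<le> K" by (auto simp: K_def)
  have "0 < s" "s + s < \<delta>" using \<delta> \<open>0 < a\<close> K by (auto simp: s_def)
  moreover have "s * K \<le> a"
    using pos_le_divide_eq[OF K(1)] min.cobounded2[of "\<delta> / 4" "a / K"] by (simp add: s_def)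
  ultimately have s: "0 < s" "s + s < \<delta>" "s * \<bar>\<omega>\<bar> \<le> a" "s * \<bar>w\<bar> \<le> a"
    using K mult_left_mono[of _ K s] by (smt (verit))+
  define x q0 z1 where "x = disk_pole C sd" and "q0 = (h - e * h, - e * s * \<omega>)"
    and "z1 = (h - e * h, e * s * w)"
  define v0 v1 where "v0 = (1 / s) *\<^sub>R (x - q0)" and "v1 = (1 / s) *\<^sub>R (z1 - x)"
  have q0: "q0 \<in> side_opening C sd" and z1: "z1 \<in> side_opening C sd"
    unfolding side_opening_eq q0_def z1_def h_def e_def using s by (auto simp: abs_mult a_def)
  have x: "x \<in> bdry C" using disk_pole_sphere r unfolding x_def bdry_def r_def by auto
  have "next_hit C q0 v0 s"
    unfolding v0_def
  proof (rule next_hit_segment[OF s(1) x])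
    fix u :: real assume "0 < u" "u < 1"
    then have "x + (1 - u) *\<^sub>R (q0 - x) \<in> Gamma C - bdry C"
      unfolding x_def by (intro segment_pole_opening_in_cell[OF ok q0]) auto
    then show "q0 + u *\<^sub>R (x - q0) \<in> Gamma C - bdry C" by (simp add: algebra_simps)
  qed
  moreover have "next_hit C x v1 s"
    unfolding v1_def
  proof (rule next_hit_segment[OF s(1)])
    show "z1 \<in> bdry C" using z1 side_opening_frontier[OF ok] unfolding bdry_def by blast
  qed (use segment_pole_opening_in_cell[OF ok z1] x_def in simp)
  moreover have "q0 + s *\<^sub>R v0 = x" and exit_point: "x + s *\<^sub>R v1 = z1"
    using s by (simp_all add: v0_def v1_def)
  moreover have "collide C x v0 w = Some (Inr (v1, \<omega>))"
    using collide_disk_pole[OF ok] s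
    by (simp add: x_def v0_def v1_def q0_def z1_def disk_pole_def e_def algebra_simps)
  moreover have "collide C (x + s *\<^sub>R v1) v1 \<omega> = Some (Inl sd)"
    unfolding exit_point using collide_side_opening ok z1 by (simp add: cell_ok_def)
  ultimately interpret round_trip_injection C q0 v0 x v1 w \<omega> s s sd P \<tau> \<delta>
    by unfold_locales (use nohit s \<delta> in auto)
  have "fst v0 = e * ((h - r) / s)"
    using s(1) by (simp add: v0_def x_def q0_def disk_pole_def e_def r_def h_def field_simps)
  then have "inward sd * fst v0 = (h - r) / s"
    by (simp add: e_def mult.assoc[symmetric])
  then have "inward sd * fst v0 > 0" using r s by simp
  then show ?thesis using q0 injection_works[OF defined] by blast
qed

theorem lemma1:
  fixes C :: cell and P :: "(pt \<times> pt) list"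
    and w_hat \<tau> \<omega> \<delta> :: real
  assumes geom: "cell_ok C"
    and inside: "\<forall>(q, v)\<in>set P. q \<in> Gamma C - bdry C"
    and tau: "\<tau> > 0"
    and nohit: "no_disk_hit_before C \<tau> (init_sys w_hat P)"
    and delta: "0 < \<delta>" "\<delta> < \<tau>"
    and defined: "\<exists>S. (step C)\<^sup>*\<^sup>* (init_sys w_hat P) S \<and> at_time C \<delta> S"
  shows "(\<exists>q0 v0. q0 \<in> openL C \<and> fst v0 > 0 \<and> injection_works C w_hat P q0 v0 \<delta> \<omega> Lft) \<and>
         (\<exists>q0 v0. q0 \<in> openR C \<and> fst v0 < 0 \<and> injection_works C w_hat P q0 v0 \<delta> \<omega> Rgt)"
  using injection_through_side[OF geom nohit delta defined, of Lft \<omega>]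
    injection_through_side[OF geom nohit delta defined, of Rgt \<omega>]
  by auto

end
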